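(* Let $\mathscr H$ be a real Hilbert space, $\mathscr A\subseteq\mathscr H$ a closed linear subspace, $\mathsf Z$ a countable index set and $(h_k)_{k\in\mathsf Z}$ an orthogonal family of nonzero vectors of $\mathscr H$. Put $\hat h_k:=h_k/\|h_k\|$ and define the bounded linear operator $\hat S:\mathscr A\to\ell^2(\mathsf Z)$, $\hat S u:=(\langle u,\hat h_k\rangle)_{k\in\mathsf Z}$. Assume that the range $\mathrm{ran}(\hat S)$ is closed in $\ell^2(\mathsf Z)$. Let $\mathbf s=(\mathrm s_k)_{k\in\mathsf Z}$ be a real sequence whose normalized version $\hat{\mathbf s}:=(\mathrm s_k/\|h_k\|)_{k\in\mathsf Z}$ lies in $\ell^2(\mathsf Z)$, and let $u^{(0)}\in\mathscr A$. Then $(P_{\mathscr A}P_{\mathscr C_{\mathbf s}})^n u^{(0)}$ converges in norm as $n\to\infty$ and $$\lim_{n\to\infty}(P_{\mathscr A}P_{\mathscr C_{\mathbf s}})^n u^{(0)}=P_{\mathscr A\cap\mathscr C_{\bar{\mathbf s}}}\,u^{(0)}=u^{(0)}+\hat S^\dagger\big(\hat{\mathbf s}-\hat S u^{(0)}\big),$$ where $\bar{\mathbf s}=(\bar{\mathrm s}_k)_{k\in\mathsf Z}$ is the sequence defined by $\bar{\mathrm s}_k:=\|h_k\|\,\mathrm q_k$, with $(\mathrm q_k)_{k\in\mathsf Z}$ the orthogonal projection of $\hat{\mathbf s}$ onto $\mathrm{ran}(\hat S)$ in $\ell^2(\mathsf Z)$ (in particular $\mathscr A\cap\mathscr C_{\bar{\mathbf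 s}}\neq\emptyset$), and $\hat S^\dagger$ is the Moore–Penrose pseudo-inverse of $\hat S$.
   Context: For a real sequence $\mathbf t=(\mathrm t_k)_{k\in\mathsf Z}$, $\mathscr C_{\mathbf t}:=\{v\in\mathscr H:\ \langle v,h_k\rangle=\mathrm t_k\ \forall k\in\mathsf Z\}$. $P_{\mathscr V}$ denotes orthogonal projection (nearest-point map) onto a nonempty closed affine subspace $\mathscr V$; $P_{\mathscr A}$ is the orthogonal projection onto $\mathscr A$. $\ell^2(\mathsf Z)$ has its canonical norm $\|\cdot\|_2$. The Moore–Penrose pseudo-inverse is defined, for $\mathbf c\in\ell^2(\mathsf Z)$, by $\hat S^\dagger\mathbf c:=\arg\min_{v\in\mathscr M_{\mathbf c}}\|v\|$, where $\mathscr M_{\mathbf c}:=\{v\in\mathscr A:\ \|\hat S v-\mathbf c\|_2\ \text{is minimal}\}$. *)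

theory Defs
  imports "HOL-Analysis.Analysis"
begin

definition nearest :: "'a::real_inner set \<Rightarrow> 'a \<Rightarrow> 'a" where
  "nearest V x = (THE y. y \<in> V \<and> (\<forall>z\<in>V. norm (x - y) \<le> norm (x - z)))"

definition l2 :: "'z set \<Rightarrow> ('z \<Rightarrow> real) set" where
  "l2 Z = {c. (\<forall>k. k \<notin> Z \<longrightarrow> c k = 0) \<and> (\<lambda>k. (c k)\<^sup>2) summable_on Z}"

definition l2norm :: "'z set \<Rightarrow> ('z \<Rightarrow> real) \<Rightarrow> real" where
  "l2norm Z c = sqrt (\<Sum>\<^sub>\<infinity>k\<in>Z. (c k)\<^sup>2)"

definition l2_closed :: "'z set \<Rightarrow> ('z \<Rightarrow> real) set \<Rightarrow> bool" where
  "l2_closed Z S \<longleftrightarrow> (\<forall>f c. (\<forall>n. f n \<in> S) \<and> c \<in> l2 Z \<and>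
      (\<lambda>n. l2norm Z (f n - c)) \<longlonglongrightarrow> 0 \<longrightarrow> c \<in> S)"

definition l2_proj :: "'z set \<Rightarrow> ('z \<Rightarrow> real) set \<Rightarrow> ('z \<Rightarrow> real) \<Rightarrow> ('z \<Rightarrow> real)" where
  "l2_proj Z S c = (THE q. q \<in> S \<and> (\<forall>r\<in>S. l2norm Z (c - q) \<le> l2norm Z (c - r)))"

definition Cset :: "'z set \<Rightarrow> ('z \<Rightarrow> 'a::real_inner) \<Rightarrow> ('z \<Rightarrow> real) \<Rightarrow> 'a set" where
  "Cset Z h t = {v. \<forall>k\<in>Z. inner v (h k) = t k}"

definition Shat :: "'z set \<Rightarrow> ('z \<Rightarrow> 'a::real_inner) \<Rightarrow> 'a \<Rightarrow> ('z \<Rightarrow> real)" where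
  "Shat Z h u = (\<lambda>k. if k \<in> Z then inner u (h k /\<^sub>R norm (h k)) else 0)"

definition Mset :: "'a::real_inner set \<Rightarrow> 'z set \<Rightarrow> ('z \<Rightarrow> 'a) \<Rightarrow> ('z \<Rightarrow> real) \<Rightarrow> 'a set" where
  "Mset A Z h c = {v \<in> A. \<forall>w\<in>A. l2norm Z (Shat Z h v - c) \<le> l2norm Z (Shat Z h w - c)}"

definition Shat_pinv :: "'a::real_inner set \<Rightarrow> 'z set \<Rightarrow> ('z \<Rightarrow> 'a) \<Rightarrow> ('z \<Rightarrow> real) \<Rightarrow> 'a" where
  "Shat_pinv A Z h c = (THE v. v \<in> Mset A Z h c \<and> (\<forall>w\<in>Mset A Z h c. norm v \<le> norm w))"

end

theory Submission
  imports Defs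
begin

text \<open>
  Let \<open>proj\<close> be the orthogonal projection onto the closed span of the \<open>h k\<close> and \<open>synth shat\<close>
  the vector with coefficients \<open>shat\<close>; the nearest point of \<open>Cset Z h s\<close> to \<open>v\<close> is
  \<open>v + (synth shat - proj v)\<close>. Because the range of \<open>Shat\<close> is closed, so is \<open>proj ` A\<close>, which
  yields a least-squares solution \<open>lsq \<in> A\<close>: \<open>proj lsq\<close> is nearest to \<open>synth shat\<close> in
  \<open>proj ` A\<close>, and the residual \<open>synth shat - proj lsq\<close> is orthogonal to \<open>A\<close>. Hence one step of
  the iteration is \<open>u \<mapsto> lsq + R (u - lsq)\<close> with \<open>R y = y - nearest A (proj y)\<close>. On \<open>A\<close> the
  operator \<open>R\<close> is self-adjoint with \<open>\<parallel>R y\<parallel>\<^sup>2 \<le> \<langle>R y, y\<rangle>\<close>, so its powers converge strongly to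
  the orthogonal projection onto its fixed space \<open>A \<inter> ker Shat\<close>. The limit of the iteration is
  therefore the point of \<open>lsq + (A \<inter> ker Shat) = A \<inter> Cset Z h sbar\<close> nearest to \<open>u0\<close>, and the
  same orthogonality identifies its difference with \<open>u0\<close> as the minimum-norm least-squares
  solution \<open>Shat_pinv A Z h (shat - Shat Z h u0)\<close>.
\<close>

section \<open>Nearest points in Hilbert space\<close>

lemma norm_diff_sq_orthogonal:
  fixes x y v :: "'a::real_inner"
  assumes "inner (x - y) (v - y) = 0"
  shows "norm (x - v)^2 = norm (x - y)^2 + norm (v - y)^2"
proof -
  have "orthogonal (x - y) (y - v)"
    using assms by (simp add: orthogonal_def inner_diff_right inner_diff_left algebra_simps)
  then show ?thesis
    using norm_add_Pythagorean[of "x - y" "y - v"] by (simp add: norm_minus_commute)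
qed

lemma orthogonal_residual_imp_le:
  fixes x y v :: "'a::real_inner"
  assumes "inner (x - y) (v - y) = 0"
  shows "norm (x - y) \<le> norm (x - v)"
proof (rule power2_le_imp_le)
  show "norm (x - y)^2 \<le> norm (x - v)^2" using norm_diff_sq_orthogonal[OF assms] by simp
qed simp

lemma orthogonal_residual_imp_eq:
  fixes x y v :: "'a::real_inner"
  assumes "inner (x - y) (v - y) = 0" and "norm (x - v) \<le> norm (x - y)"
  shows "v = y"
proof -
  have "norm (x - v)^2 \<le> norm (x - y)^2" using assms(2) by (simp add: power_mono)
  then show ?thesis using norm_diff_sq_orthogonal[OF assms(1)] by simp
qed

lemma nearest_eqI:
  fixes x y :: "'a::real_inner"
  assumes "y \<in> V" and "\<And>v. v \<in> V \<Longrightarrow> inner (x - y) (v - y) = 0"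
  shows "nearest V x = y"
  unfolding nearest_def
  by (rule the_equality)
    (use assms orthogonal_residual_imp_le orthogonal_residual_imp_eq in blast)+

lemma Shat_pinv_eq_nearest: "Shat_pinv A Z h c = nearest (Mset A Z h c) 0"
  by (simp add: Shat_pinv_def nearest_def)

lemma norm_diff_midpoint_parallelogram:
  fixes x a b :: "'a::real_inner"
  shows "norm (a - b)^2 = 2 * norm (x - a)^2 + 2 * norm (x - b)^2 - 4 * norm (x - midpoint a b)^2"
  unfolding midpoint_def power2_norm_eq_inner
  by (simp add: inner_diff_left inner_diff_right inner_add_left inner_add_right inner_commute
      algebra_simps)

lemma real_eq_0_if_quadratic_bound:
  fixes a b :: real
  assumes "b \<ge> 0" and "\<And>t. 2 * t * a \<le> t^2 * b"
  shows "a = 0"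
proof -
  define t where "t = a / (b + 1)"
  have tb: "t * (b + 1) = a" using assms(1) by (simp add: t_def)
  have "2 * t * a * (b + 1)^2 \<le> t^2 * b * (b + 1)^2"
    using assms(2) by (rule mult_right_mono) simp
  then have "2 * a * (t * (b + 1)) * (b + 1) \<le> (t * (b + 1))^2 * b"
    by (simp add: power2_eq_square algebra_simps)
  then have "a^2 * (2 * (b + 1) - b) \<le> 0"
    unfolding tb by (simp add: power2_eq_square algebra_simps)
  moreover have "2 * (b + 1) - b > 0" using assms(1) by simp
  ultimately show ?thesis by (simp add: mult_le_0_iff)
qed

lemma convex_minimizing_sequence_Cauchy:
  fixes f :: "nat \<Rightarrow> 'a::real_inner"
  assumes "convex V" and "\<And>n. f n \<in> V" and "\<And>v. v \<in> V \<Longrightarrow> d \<le> norm (x - v)^2"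
    and "\<And>n. norm (x - f n)^2 < d + 1 / real (Suc n)"
  shows "Cauchy f"
proof (rule metric_CauchyI)
  have f_diff: "norm (f m - f n)^2 \<le> 2 / real (Suc m) + 2 / real (Suc n)" for m n
  proof -
    have "midpoint (f m) (f n) \<in> V"
      using convexD[OF assms(1) assms(2)[of m] assms(2)[of n], of "1/2" "1/2"]
      by (simp add: midpoint_def scaleR_add_right)
    from assms(3)[OF this] show ?thesis
      using norm_diff_midpoint_parallelogram[of "f m" "f n" x] assms(4)[of m] assms(4)[of n]
      by linarith
  qed
  fix \<epsilon> :: real assume "\<epsilon> > 0"
  then obtain N where N: "inverse (real (Suc N)) < \<epsilon>^2 / 4"
    using reals_Archimedean[of "\<epsilon>^2 / 4"] by auto
  have "dist (f m) (f n) < \<epsilon>" if "m \<ge> N" "n \<ge> N" for m n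
  proof -
    have "2 / real (Suc m) \<le> 2 / real (Suc N)" "2 / real (Suc n) \<le> 2 / real (Suc N)"
      using that by (auto intro!: divide_left_mono)
    moreover have "4 / real (Suc N) < \<epsilon>^2" using N by (simp add: field_simps)
    ultimately have "norm (f m - f n)^2 < \<epsilon>^2" using f_diff[of m n] by linarith
    then show ?thesis
      using \<open>\<epsilon> > 0\<close> by (simp add: dist_norm power_less_imp_less_base)
  qed
  then show "\<exists>N. \<forall>m\<ge>N. \<forall>n\<ge>N. dist (f m) (f n) < \<epsilon>" by blast
qed

lemma closed_convex_nearest_point_exists:
  fixes V :: "'a::{real_inner,complete_space} set"
  assumes "closed V" and "convex V" and "V \<noteq> {}"
  obtains y where "y \<in> V" and "\<And>v. v \<in> V \<Longrightarrow> norm (x - y) \<le> norm (x - v)"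
proof -
  define d where "d = Inf ((\<lambda>v. norm (x - v)^2) ` V)"
  have d_le: "d \<le> norm (x - v)^2" if "v \<in> V" for v
    unfolding d_def using that by (intro cInf_lower bdd_belowI[of _ 0]) auto
  have "\<exists>v\<in>V. norm (x - v)^2 < d + 1 / real (Suc n)" for n
    using cInf_lessD[of "(\<lambda>v. norm (x - v)^2) ` V" "d + 1 / real (Suc n)"] assms(3)
    unfolding d_def by auto
  then obtain f where f_in: "\<And>n. f n \<in> V"
    and f_near: "\<And>n. norm (x - f n)^2 < d + 1 / real (Suc n)"
    by metis
  obtain y where f_lim: "f \<longlonglongrightarrow> y"
    using convex_minimizing_sequence_Cauchy[OF assms(2) f_in d_le f_near]
    by (auto simp: Cauchy_convergent_iff convergent_def)
  have y_le_d: "norm (x - y)^2 \<le> d"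
  proof (rule LIMSEQ_le)
    show "(\<lambda>n. norm (x - f n)^2) \<longlonglongrightarrow> norm (x - y)^2"
      by (intro tendsto_intros f_lim)
    show "(\<lambda>n. d + 1 / real (Suc n)) \<longlonglongrightarrow> d"
      using tendsto_add[OF tendsto_const LIMSEQ_inverse_real_of_nat, of d]
      by (simp add: inverse_eq_divide)
    show "\<exists>N. \<forall>n\<ge>N. norm (x - f n)^2 \<le> d + 1 / real (Suc n)"
      using f_near less_imp_le by blast
  qed
  have "norm (x - y) \<le> norm (x - v)" if "v \<in> V" for v
    by (rule power2_le_imp_le) (use d_le[OF that] y_le_d in linarith, simp)
  moreover have "y \<in> V" using closed_sequentially[OF assms(1) _ f_lim] f_in by blast
  ultimately show ?thesis using that by blast
qed

locale closed_subspace =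
  fixes V :: "'a::{real_inner,complete_space} set"
  assumes subspace: "subspace V" and closed: "closed V"
begin

lemma nearest_point_orthogonal:
  assumes "y \<in> V" and "\<And>v. v \<in> V \<Longrightarrow> norm (x - y) \<le> norm (x - v)" and "z \<in> V"
  shows "inner (x - y) z = 0"
proof (rule real_eq_0_if_quadratic_bound)
  fix t :: real
  have "y + t *\<^sub>R z \<in> V" using subspace assms(1,3) by (simp add: subspace_add subspace_scale)
  then have "norm (x - y) \<le> norm ((x - y) - t *\<^sub>R z)"
    using assms(2) by (simp add: diff_diff_eq)
  then have "norm (x - y)^2 \<le> norm ((x - y) - t *\<^sub>R z)^2" by (simp add: power_mono)
  also have "\<dots> = norm (x - y)^2 - 2 * t * inner (x - y) z + t^2 * norm z ^2"
    unfolding power2_norm_eq_inner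
    by (simp add: inner_diff_left inner_diff_right inner_commute power2_eq_square algebra_simps)
  finally show "2 * t * inner (x - y) z \<le> t^2 * norm z ^2" by simp
qed simp

lemma nearest_subspace_eqI:
  assumes "y \<in> V" and "\<And>z. z \<in> V \<Longrightarrow> inner (x - y) z = 0"
  shows "nearest V x = y"
  using assms subspace by (intro nearest_eqI) (auto simp: subspace_diff)

lemma nearest_subspace:
  shows nearest_in: "nearest V x \<in> V"
    and nearest_orthogonal: "z \<in> V \<Longrightarrow> inner (x - nearest V x) z = 0"
proof -
  obtain y where y: "y \<in> V" "\<And>v. v \<in> V \<Longrightarrow> norm (x - y) \<le> norm (x - v)"
    using closed_convex_nearest_point_exists[OF closed subspace_imp_convex[OF subspace]]
      subspace_0[OF subspace] by blast
  have "nearest V x = y"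
    using nearest_point_orthogonal[OF y] y(1) by (intro nearest_subspace_eqI)
  then show "nearest V x \<in> V" "z \<in> V \<Longrightarrow> inner (x - nearest V x) z = 0"
    using nearest_point_orthogonal[OF y] y(1) by auto
qed

lemma nearest_id: "a \<in> V \<Longrightarrow> nearest V a = a"
  by (rule nearest_subspace_eqI) auto

lemma inner_nearest: "a \<in> V \<Longrightarrow> inner (nearest V x) a = inner x a"
  using nearest_orthogonal[of a x] by (simp add: inner_diff_left)

lemma nearest_eq_0: "(\<And>a. a \<in> V \<Longrightarrow> inner x a = 0) \<Longrightarrow> nearest V x = 0"
  using subspace by (intro nearest_subspace_eqI) (auto simp: subspace_0)

lemma linear_nearest: "linear (nearest V)"
proof (rule linearI)
  fix x y :: 'a and c :: real
  show "nearest V (x + y) = nearest V x + nearest V y"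
  proof (rule nearest_subspace_eqI)
    show "nearest V x + nearest V y \<in> V" using subspace nearest_in by (simp add: subspace_add)
    fix z assume "z \<in> V"
    have "x + y - (nearest V x + nearest V y) = (x - nearest V x) + (y - nearest V y)" by simp
    then show "inner (x + y - (nearest V x + nearest V y)) z = 0"
      using nearest_orthogonal[OF \<open>z \<in> V\<close>] by (simp only: inner_add_left)
  qed
  show "nearest V (c *\<^sub>R x) = c *\<^sub>R nearest V x"
  proof (rule nearest_subspace_eqI)
    show "c *\<^sub>R nearest V x \<in> V" using subspace nearest_in by (simp add: subspace_scale)
    fix z assume "z \<in> V"
    have "c *\<^sub>R x - c *\<^sub>R nearest V x = c *\<^sub>R (x - nearest V x)" by (simp add: scaleR_diff_right)
    then show "inner (c *\<^sub>R x - c *\<^sub>R nearest V x) z = 0"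
      using nearest_orthogonal[OF \<open>z \<in> V\<close>] by simp
  qed
qed

lemma norm_nearest_le: "norm (nearest V x) \<le> norm x"
proof (rule power2_le_imp_le)
  show "norm (nearest V x)^2 \<le> norm x ^2"
    using norm_diff_sq_orthogonal[of x "nearest V x" 0] nearest_orthogonal nearest_in by simp
qed simp

end

section \<open>Powers of a positive contraction\<close>

locale positive_contraction =
  fixes S :: "'a::{real_inner,complete_space} set" and T :: "'a \<Rightarrow> 'a"
  assumes subspace: "subspace S" and closed: "closed S"
    and maps_to: "\<And>y. y \<in> S \<Longrightarrow> T y \<in> S"
    and diff: "\<And>y w. T (y - w) = T y - T w"
    and selfadjoint: "\<And>y w. y \<in> S \<Longrightarrow> w \<in> S \<Longrightarrow> inner (T y) w = inner y (T w)"
    and firmly_nonexpansive: "\<And>y. y \<in> S \<Longrightarrow> norm (T y)^2 \<le> inner (T y) y"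
begin

lemma norm_le:
  assumes "y \<in> S"
  shows "norm (T y) \<le> norm y"
proof -
  have "norm (T y) * norm (T y) \<le> norm (T y) * norm y"
    using firmly_nonexpansive[OF assms] norm_cauchy_schwarz[of "T y" y]
    by (simp add: power2_eq_square)
  then show ?thesis by (cases "T y = 0") simp_all
qed

lemma inner_le:
  assumes "y \<in> S"
  shows "inner (T y) y \<le> norm y ^2"
proof -
  have "inner (T y) y \<le> norm (T y) * norm y" by (rule norm_cauchy_schwarz)
  also have "\<dots> \<le> norm y * norm y" using norm_le[OF assms] by (simp add: mult_right_mono)
  finally show ?thesis by (simp add: power2_eq_square)
qed

lemma powers_in: "x \<in> S \<Longrightarrow> (T ^^ n) x \<in> S"
  by (induction n) (simp_all add: maps_to)

lemma inner_powers: "x \<in> S \<Longrightarrow> inner ((T ^^ i) x) ((T ^^ j) x) = inner ((T ^^ (i + j)) x) x"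
proof (induction i arbitrary: j)
  case (Suc i)
  have "inner ((T ^^ Suc i) x) ((T ^^ j) x) = inner ((T ^^ i) x) ((T ^^ Suc j) x)"
    using selfadjoint[OF powers_in powers_in, OF Suc.prems Suc.prems] by simp
  then show ?case using Suc.IH[OF Suc.prems, of "Suc j"] by simp
qed (simp add: inner_commute)

text \<open>The sequence \<open>\<langle>T\<^sup>k x, x\<rangle>\<close> is nonnegative and nonincreasing: its terms alternate between
  \<open>\<parallel>y\<parallel>\<^sup>2\<close> and \<open>\<langle>T y, y\<rangle>\<close> for \<open>y = T\<^sup>j x\<close>, and \<open>\<parallel>T y\<parallel>\<^sup>2 \<le> \<langle>T y, y\<rangle> \<le> \<parallel>y\<parallel>\<^sup>2\<close>.\<close>

lemma inner_powers_even: "x \<in> S \<Longrightarrow> inner ((T ^^ (j + j)) x) x = norm ((T ^^ j) x)^2"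
  using inner_powers[of x j j] by (simp add: power2_norm_eq_inner)

lemma inner_powers_odd:
  "x \<in> S \<Longrightarrow> inner ((T ^^ Suc (j + j)) x) x = inner (T ((T ^^ j) x)) ((T ^^ j) x)"
  using inner_powers[of x "Suc j" j] by simp

lemma inner_powers_decreasing:
  assumes "x \<in> S"
  shows "inner ((T ^^ Suc k) x) x \<le> inner ((T ^^ k) x) x"
proof -
  have "\<exists>j. k = j + j \<or> k = Suc (j + j)" by presburger
  then obtain j where "k = j + j \<or> k = Suc (j + j)" by blast
  then show ?thesis
  proof
    assume "k = j + j"
    then show ?thesis
      using inner_le[OF powers_in[OF assms]] inner_powers_odd[OF assms] inner_powers_even[OF assms]
      by simp
  next
    assume "k = Suc (j + j)"
    then have "Suc k = Suc j + Suc j" by simp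
    then show ?thesis
      using firmly_nonexpansive[OF powers_in[OF assms]] inner_powers_odd[OF assms, of j]
        inner_powers_even[OF assms, of "Suc j"] \<open>k = Suc (j + j)\<close>
      by simp
  qed
qed

lemma inner_powers_nonneg: "x \<in> S \<Longrightarrow> 0 \<le> inner ((T ^^ k) x) x"
proof -
  assume "x \<in> S"
  have "\<exists>j. k = j + j \<or> k = Suc (j + j)" by presburger
  then obtain j where "k = j + j \<or> k = Suc (j + j)" by blast
  then show ?thesis
    using inner_powers_even[OF \<open>x \<in> S\<close>, of j] inner_powers_odd[OF \<open>x \<in> S\<close>, of j]
      firmly_nonexpansive[OF powers_in[OF \<open>x \<in> S\<close>], of j]
    by (auto intro: order_trans[OF zero_le_power2])
qed

lemma powers_Cauchy:
  assumes "x \<in> S"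
  shows "Cauchy (\<lambda>n. (T ^^ n) x)"
proof (rule metric_CauchyI)
  define a where "a k = inner ((T ^^ k) x) x" for k
  have "decseq a" unfolding a_def decseq_Suc_iff using inner_powers_decreasing[OF assms] by blast
  then obtain \<alpha> where "a \<longlonglongrightarrow> \<alpha>"
    using decseq_convergent[of a 0] inner_powers_nonneg[OF assms] unfolding a_def by blast
  have dist_eq: "dist ((T ^^ m) x) ((T ^^ n) x)^2 = a (m + m) + a (n + n) - 2 * a (m + n)" for m n
  proof -
    have "dist ((T ^^ m) x) ((T ^^ n) x)^2 = inner ((T ^^ m) x) ((T ^^ m) x)
        + inner ((T ^^ n) x) ((T ^^ n) x) - 2 * inner ((T ^^ m) x) ((T ^^ n) x)"
      unfolding dist_norm power2_norm_eq_inner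
      by (simp add: inner_diff_left inner_diff_right inner_commute)
    then show ?thesis unfolding a_def inner_powers[OF assms] .
  qed
  fix \<epsilon> :: real assume "\<epsilon> > 0"
  then have "\<epsilon>^2 / 4 > 0" by simp
  then obtain N where N: "\<And>k. k \<ge> N \<Longrightarrow> \<bar>a k - \<alpha>\<bar> < \<epsilon>^2 / 4"
    using \<open>a \<longlonglongrightarrow> \<alpha>\<close> unfolding LIMSEQ_iff real_norm_def by blast
  have "dist ((T ^^ m) x) ((T ^^ n) x) < \<epsilon>" if "m \<ge> N" "n \<ge> N" for m n
  proof (rule power2_less_imp_less)
    have "\<bar>a (m + m) - \<alpha>\<bar> < \<epsilon>^2 / 4" "\<bar>a (n + n) - \<alpha>\<bar> < \<epsilon>^2 / 4"
      "\<bar>a (m + n) - \<alpha>\<bar> < \<epsilon>^2 / 4"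
      using that by (intro N; simp)+
    then show "dist ((T ^^ m) x) ((T ^^ n) x)^2 < \<epsilon>^2"
      unfolding dist_eq by linarith
  qed (use \<open>\<epsilon> > 0\<close> in simp)
  then show "\<exists>N. \<forall>m\<ge>N. \<forall>n\<ge>N. dist ((T ^^ m) x) ((T ^^ n) x) < \<epsilon>" by blast
qed

theorem powers_tendsto_fixed_point:
  assumes "x \<in> S"
  obtains z where "(\<lambda>n. (T ^^ n) x) \<longlonglongrightarrow> z" and "z \<in> S" and "T z = z"
    and "\<And>w. w \<in> S \<Longrightarrow> T w = w \<Longrightarrow> inner z w = inner x w"
proof -
  obtain z where lim: "(\<lambda>n. (T ^^ n) x) \<longlonglongrightarrow> z"
    using powers_Cauchy[OF assms] Cauchy_convergent_iff convergent_def by blast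
  have "z \<in> S" using closed_sequentially[OF closed _ lim] powers_in[OF assms] by blast
  have "(\<lambda>n. T ((T ^^ n) x)) \<longlonglongrightarrow> T z"
  proof (rule LIM_zero_cancel, rule Lim_null_comparison)
    have "norm (T ((T ^^ n) x) - T z) \<le> norm ((T ^^ n) x - z)" for n
      using norm_le[of "(T ^^ n) x - z"] subspace powers_in[OF assms] \<open>z \<in> S\<close>
      by (simp add: diff subspace_diff)
    then show "\<forall>\<^sub>F n in sequentially. norm (T ((T ^^ n) x) - T z) \<le> norm ((T ^^ n) x - z)"
      by simp
    show "(\<lambda>n. norm ((T ^^ n) x - z)) \<longlonglongrightarrow> 0"
      using lim by (simp add: LIM_zero tendsto_norm_zero)
  qed
  moreover have "(\<lambda>n. T ((T ^^ n) x)) \<longlonglongrightarrow> z"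
    using LIMSEQ_Suc[OF lim] by simp
  ultimately have "T z = z" using LIMSEQ_unique by blast
  have "inner z w = inner x w" if "w \<in> S" "T w = w" for w
  proof -
    have const: "inner ((T ^^ n) x) w = inner x w" for n
      by (induction n) (simp_all add: selfadjoint[OF powers_in[OF assms] that(1)] that(2))
    have "(\<lambda>n. inner ((T ^^ n) x) w) \<longlonglongrightarrow> inner z w" by (intro tendsto_intros lim)
    then show ?thesis by (simp add: const LIMSEQ_const_iff)
  qed
  then show ?thesis using that lim \<open>z \<in> S\<close> \<open>T z = z\<close> by blast
qed

end

section \<open>Orthogonal families\<close>

lemma summable_on_Cauchy_criterion:
  fixes f :: "'b \<Rightarrow> 'a::{real_normed_vector,complete_space}"
  assumes "\<And>\<epsilon>. \<epsilon> > 0 \<Longrightarrow>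
    \<exists>F. finite F \<and> F \<subseteq> Z \<and> (\<forall>G. finite G \<and> G \<subseteq> Z - F \<longrightarrow> norm (sum f G) < \<epsilon>)"
  shows "f summable_on Z"
proof -
  have "\<exists>P. eventually P (finite_subsets_at_top Z) \<and> (\<forall>G1 G2. P G1 \<and> P G2 \<longrightarrow> dist (sum f G1) (sum f G2) < \<epsilon>)"
    if "\<epsilon> > 0" for \<epsilon>
  proof -
    obtain F where F: "finite F" "F \<subseteq> Z"
      and tail: "\<And>G. finite G \<Longrightarrow> G \<subseteq> Z - F \<Longrightarrow> norm (sum f G) < \<epsilon> / 2"
      using assms[of "\<epsilon> / 2"] \<open>\<epsilon> > 0\<close> by auto
    define P where "P G \<longleftrightarrow> finite G \<and> F \<subseteq> G \<and> G \<subseteq> Z" for G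
    have "eventually P (finite_subsets_at_top Z)"
      unfolding P_def eventually_finite_subsets_at_top using F by blast
    moreover have "dist (sum f G1) (sum f G2) < \<epsilon>" if "P G1" "P G2" for G1 G2
    proof -
      have "sum f G1 - sum f G2 = sum f (G1 - F) - sum f (G2 - F)"
        using that unfolding P_def by (simp add: sum_diff)
      then have "dist (sum f G1) (sum f G2) \<le> norm (sum f (G1 - F)) + norm (sum f (G2 - F))"
        by (simp add: dist_norm norm_triangle_ineq4)
      also have "\<dots> < \<epsilon> / 2 + \<epsilon> / 2"
        using that unfolding P_def by (intro add_strict_mono tail) auto
      finally show ?thesis by simp
    qed
    ultimately show ?thesis by blast
  qed
  then have "cauchy_filter (filtermap (sum f) (finite_subsets_at_top Z))"
    by (simp add: cauchy_filter_metric_filtermap)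
  then obtain s where "(sum f \<longlongrightarrow> s) (finite_subsets_at_top Z)"
    using complete_uniform[where S = UNIV] complete_UNIV by (force simp: filterlim_def)
  then show ?thesis by (auto simp: summable_on_def has_sum_def)
qed

lemma nonneg_summable_on_tail_small:
  fixes g :: "'b \<Rightarrow> real"
  assumes "g summable_on Z" and "\<And>k. k \<in> Z \<Longrightarrow> g k \<ge> 0" and "\<epsilon> > 0"
  obtains F where "finite F" "F \<subseteq> Z" "\<And>G. finite G \<Longrightarrow> G \<subseteq> Z - F \<Longrightarrow> sum g G < \<epsilon>"
proof -
  obtain F where F: "finite F" "F \<subseteq> Z" "dist (sum g F) (infsum g Z) \<le> \<epsilon> / 2"
    using has_sum_finite_approximation[OF has_sum_infsum[OF assms(1)], of "\<epsilon> / 2"] assms(3) by auto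
  have "sum g G < \<epsilon>" if "finite G" "G \<subseteq> Z - F" for G
  proof -
    have "sum g F + sum g G = sum g (F \<union> G)"
      using F(1) that by (subst sum.union_disjoint) auto
    also have "\<dots> = infsum g (F \<union> G)"
      using F(1) that(1) by simp
    also have "\<dots> \<le> infsum g Z"
      using F that assms(1,2) by (intro infsum_mono_neutral) auto
    finally show ?thesis using F(3) \<open>\<epsilon> > 0\<close> unfolding dist_real_def by linarith
  qed
  then show ?thesis using F that by blast
qed

locale orthogonal_family =
  fixes Z :: "'z set" and h :: "'z \<Rightarrow> 'a::{real_inner,complete_space}"
  assumes orthogonal: "\<And>j k. j \<in> Z \<Longrightarrow> k \<in> Z \<Longrightarrow> j \<noteq> k \<Longrightarrow> inner (h j) (h k) = 0"
    and nonzero: "\<And>k. k \<in> Z \<Longrightarrow> h k \<noteq> 0"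
begin

definition hhat :: "'z \<Rightarrow> 'a" where
  "hhat k = h k /\<^sub>R norm (h k)"

lemma norm_hhat: "k \<in> Z \<Longrightarrow> norm (hhat k) = 1"
  using nonzero by (simp add: hhat_def)

lemma inner_hhat:
  assumes "j \<in> Z" "k \<in> Z"
  shows "inner (hhat j) (hhat k) = (if j = k then 1 else 0)"
proof (cases "j = k")
  case True
  then show ?thesis using assms by (simp add: dot_square_norm norm_hhat)
qed (simp add: hhat_def orthogonal assms)

lemma Shat_hhat: "Shat Z h u = (\<lambda>k. if k \<in> Z then inner u (hhat k) else 0)"
  by (rule ext) (simp add: Shat_def hhat_def)

lemma Shat_apply: "k \<in> Z \<Longrightarrow> Shat Z h u k = inner u (hhat k)"
  by (simp add: Shat_hhat)

lemma Shat_diff: "Shat Z h (u - v) = Shat Z h u - Shat Z h v"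
  by (auto simp: Shat_def inner_diff_left fun_eq_iff right_diff_distrib)

lemma Shat_add: "Shat Z h (u + v) = (\<lambda>k. Shat Z h u k + Shat Z h v k)"
  by (auto simp: Shat_def inner_add_left fun_eq_iff distrib_left)

lemma mem_Cset_iff: "v \<in> Cset Z h t \<longleftrightarrow> (\<forall>k\<in>Z. Shat Z h v k = t k / norm (h k))"
  using nonzero by (auto simp: Cset_def Shat_def field_simps)

lemma norm_sum_hhat:
  assumes "finite F" "F \<subseteq> Z"
  shows "norm (\<Sum>k\<in>F. c k *\<^sub>R hhat k)^2 = (\<Sum>k\<in>F. (c k)^2)"
proof -
  have "pairwise (\<lambda>j k. orthogonal (c j *\<^sub>R hhat j) (c k *\<^sub>R hhat k)) F"
    using assms(2) inner_hhat by (auto simp: pairwise_def orthogonal_def subset_iff)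
  then have "norm (\<Sum>k\<in>F. c k *\<^sub>R hhat k)^2 = (\<Sum>k\<in>F. norm (c k *\<^sub>R hhat k)^2)"
    by (rule norm_sum_Pythagorean[OF assms(1)])
  also have "\<dots> = (\<Sum>k\<in>F. (c k)^2)"
    using assms(2) by (intro sum.cong) (auto simp: norm_hhat)
  finally show ?thesis .
qed

lemma bessel_finite:
  assumes "finite F" "F \<subseteq> Z"
  shows "(\<Sum>k\<in>F. (Shat Z h u k)^2) \<le> norm u ^2"
proof -
  define p where "p = (\<Sum>k\<in>F. Shat Z h u k *\<^sub>R hhat k)"
  have "inner u p = (\<Sum>k\<in>F. (Shat Z h u k)^2)"
    using assms(2) unfolding p_def by (auto simp: inner_sum_right Shat_hhat power2_eq_square intro!: sum.cong)
  moreover have "inner p p = (\<Sum>k\<in>F. (Shat Z h u k)^2)"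
    using norm_sum_hhat[OF assms] unfolding p_def by (simp add: power2_norm_eq_inner)
  moreover have "0 \<le> inner (u - p) (u - p)" by simp
  ultimately show ?thesis
    by (simp add: inner_diff_left inner_diff_right inner_commute power2_norm_eq_inner)
qed

lemma Shat_sq_summable: "(\<lambda>k. (Shat Z h u k)^2) summable_on Z"
  using bessel_finite by (intro nonneg_bdd_above_summable_on bdd_aboveI) auto

lemma Shat_in_l2: "Shat Z h u \<in> l2 Z"
  using Shat_sq_summable by (simp add: l2_def Shat_def)

lemma bessel: "(\<Sum>\<^sub>\<infinity>k\<in>Z. (Shat Z h u k)^2) \<le> norm u ^2"
  using bessel_finite by (intro infsum_le_finite_sums Shat_sq_summable)

definition synth :: "('z \<Rightarrow> real) \<Rightarrow> 'a" where
  "synth c = (\<Sum>\<^sub>\<infinity>k\<in>Z. c k *\<^sub>R hhat k)"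

lemma synth_has_sum:
  assumes "c \<in> l2 Z"
  shows "((\<lambda>k. c k *\<^sub>R hhat k) has_sum synth c) Z"
proof -
  have "(\<lambda>k. c k *\<^sub>R hhat k) summable_on Z"
  proof (rule summable_on_Cauchy_criterion)
    fix \<epsilon> :: real assume "\<epsilon> > 0"
    have "(\<lambda>k. (c k)^2) summable_on Z" using assms by (simp add: l2_def)
    then obtain F where "finite F" "F \<subseteq> Z"
      and tail: "\<And>G. finite G \<Longrightarrow> G \<subseteq> Z - F \<Longrightarrow> (\<Sum>k\<in>G. (c k)^2) < \<epsilon>^2"
      by (rule nonneg_summable_on_tail_small[of _ Z "\<epsilon>^2"]) (use \<open>\<epsilon> > 0\<close> in auto)
    have "norm (\<Sum>k\<in>G. c k *\<^sub>R hhat k) < \<epsilon>" if "finite G" "G \<subseteq> Z - F" for G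
    proof (rule power2_less_imp_less)
      have "G \<subseteq> Z" using that by blast
      then show "norm (\<Sum>k\<in>G. c k *\<^sub>R hhat k)^2 < \<epsilon>^2"
        using norm_sum_hhat[OF that(1)] tail[OF that] by simp
    qed (use \<open>\<epsilon> > 0\<close> in simp)
    then show "\<exists>F. finite F \<and> F \<subseteq> Z \<and>
        (\<forall>G. finite G \<and> G \<subseteq> Z - F \<longrightarrow> norm (\<Sum>k\<in>G. c k *\<^sub>R hhat k) < \<epsilon>)"
      using \<open>finite F\<close> \<open>F \<subseteq> Z\<close> by blast
  qed
  then show ?thesis by (simp add: synth_def)
qed

lemma inner_synth_has_sum:
  assumes "c \<in> l2 Z"
  shows "((\<lambda>k. c k * Shat Z h y k) has_sum inner (synth c) y) Z"
proof -
  have "inner (c k *\<^sub>R hhat k) y = c k * Shat Z h y k" if "k \<in> Z" for k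
    using that by (simp add: Shat_apply inner_commute)
  then have "((\<lambda>k. inner (c k *\<^sub>R hhat k) y) has_sum inner (synth c) y) Z
      \<longleftrightarrow> ((\<lambda>k. c k * Shat Z h y k) has_sum inner (synth c) y) Z"
    by (rule has_sum_cong)
  then show ?thesis
    using has_sum_bounded_linear[OF bounded_linear_inner_left synth_has_sum[OF assms]] by blast
qed

lemma Shat_synth:
  assumes "c \<in> l2 Z"
  shows "Shat Z h (synth c) = c"
proof
  fix j
  show "Shat Z h (synth c) j = c j"
  proof (cases "j \<in> Z")
    case True
    have "((\<lambda>k. c k * Shat Z h (hhat j) k) has_sum c j) Z"
      using True inner_hhat
      by (intro has_sum_finite_neutralI[of "{j}"]) (auto simp: Shat_apply inner_commute)
    with inner_synth_has_sum[OF assms, of "hhat j"] have "inner (synth c) (hhat j) = c j"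
      by (rule has_sum_unique)
    then show ?thesis using True by (simp add: Shat_apply)
  next
    case False
    then show ?thesis using assms by (simp add: Shat_def l2_def)
  qed
qed

lemma norm_synth:
  assumes "c \<in> l2 Z"
  shows "norm (synth c) = l2norm Z c"
proof -
  have "norm (synth c)^2 = inner (synth c) (synth c)" by (simp add: dot_square_norm)
  also have "\<dots> = (\<Sum>\<^sub>\<infinity>k\<in>Z. (c k)^2)"
    using inner_synth_has_sum[OF assms, of "synth c"]
    unfolding Shat_synth[OF assms] power2_eq_square by (rule infsumI[symmetric])
  finally have sq: "norm (synth c)^2 = (\<Sum>\<^sub>\<infinity>k\<in>Z. (c k)^2)" .
  show ?thesis unfolding l2norm_def sq[symmetric] by simp
qed

lemma synth_add:
  assumes "c \<in> l2 Z" "d \<in> l2 Z"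
  shows "synth (\<lambda>k. c k + d k) = synth c + synth d"
proof -
  have "((\<lambda>k. c k *\<^sub>R hhat k + d k *\<^sub>R hhat k) has_sum synth c + synth d) Z"
    by (intro has_sum_add synth_has_sum assms)
  then show ?thesis unfolding synth_def scaleR_add_left by (rule infsumI)
qed

lemma synth_scale: "synth (\<lambda>k. r * c k) = r *\<^sub>R synth c"
  unfolding synth_def scaleR_scaleR[symmetric] by (rule infsum_scaleR_right)

lemma Shat_scale: "Shat Z h (r *\<^sub>R u) = (\<lambda>k. r * Shat Z h u k)"
  by (auto simp: Shat_def)

lemma Shat_eq_iff: "Shat Z h u = Shat Z h v \<longleftrightarrow> (\<forall>k\<in>Z. Shat Z h u k = Shat Z h v k)"
  by (auto simp: Shat_def fun_eq_iff)

definition proj :: "'a \<Rightarrow> 'a" where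
  "proj u = synth (Shat Z h u)"

lemma Shat_proj: "Shat Z h (proj u) = Shat Z h u"
  by (simp add: proj_def Shat_synth Shat_in_l2)

lemma proj_eq_iff: "proj u = proj v \<longleftrightarrow> Shat Z h u = Shat Z h v"
  by (metis Shat_proj proj_def)

lemma proj_synth: "c \<in> l2 Z \<Longrightarrow> proj (synth c) = synth c"
  by (simp add: proj_def Shat_synth)

lemma proj_idem: "proj (proj u) = proj u"
  by (simp add: proj_eq_iff Shat_proj)

lemma linear_proj: "linear proj"
  by (rule linearI) (simp_all add: proj_def Shat_add Shat_scale synth_add synth_scale Shat_in_l2)

lemma inner_proj: "inner (proj u) w = (\<Sum>\<^sub>\<infinity>k\<in>Z. Shat Z h u k * Shat Z h w k)"
  unfolding proj_def using inner_synth_has_sum[OF Shat_in_l2] by (rule infsumI[symmetric])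

lemma proj_selfadjoint: "inner (proj u) w = inner u (proj w)"
  by (simp add: inner_proj inner_commute[of u] mult.commute)

lemma inner_proj_self: "inner (proj u) u = norm (proj u)^2"
  by (metis proj_idem proj_selfadjoint dot_square_norm)

lemma norm_proj: "norm (proj u) = l2norm Z (Shat Z h u)"
  unfolding proj_def by (rule norm_synth[OF Shat_in_l2])

lemma norm_proj_le: "norm (proj u) \<le> norm u"
proof (rule power2_le_imp_le)
  show "norm (proj u)^2 \<le> norm u^2"
    using bessel[of u] infsum_nonneg[of Z "\<lambda>k. (Shat Z h u k)^2"] by (simp add: norm_proj l2norm_def)
qed simp

lemma Cset_Shat: "Cset Z h (\<lambda>k. norm (h k) * Shat Z h a k) = {v. proj v = proj a}"
  using nonzero by (auto simp: mem_Cset_iff Shat_eq_iff proj_eq_iff)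

lemma l2norm_Shat_diff: "l2norm Z (Shat Z h u - Shat Z h v) = norm (proj u - proj v)"
  by (simp add: norm_proj linear_diff[OF linear_proj, symmetric] Shat_diff)

end

section \<open>Alternating projections\<close>

locale alternating_projections =
  orthogonal_family Z h + A: closed_subspace A
  for Z :: "'z set" and h :: "'z \<Rightarrow> 'a::{real_inner,complete_space}" and A :: "'a set" +
  fixes s :: "'z \<Rightarrow> real"
  assumes range_closed: "l2_closed Z (Shat Z h ` A)"
    and shat_in_l2: "(\<lambda>k. if k \<in> Z then s k / norm (h k) else 0) \<in> l2 Z"
begin

definition shat :: "'z \<Rightarrow> real" where
  "shat = (\<lambda>k. if k \<in> Z then s k / norm (h k) else 0)"

lemma Shat_synth_shat: "Shat Z h (synth shat) = shat"
  using shat_in_l2 by (simp add: shat_def Shat_synth)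

lemma proj_image_closed_subspace: "closed_subspace (proj ` A)"
proof
  show "subspace (proj ` A)" by (rule linear_subspace_image[OF linear_proj A.subspace])
  show "closed (proj ` A)"
  proof (rule closed_sequential_limits[THEN iffD2], intro allI impI, elim conjE)
    fix f l assume "\<forall>n. f n \<in> proj ` A" and "f \<longlonglongrightarrow> l"
    then obtain a where a: "\<And>n. a n \<in> A" "\<And>n. f n = proj (a n)"
      unfolding image_iff by metis
    have "l2norm Z (Shat Z h (a n) - Shat Z h l) = norm (proj (f n - l))" for n
      unfolding l2norm_Shat_diff a(2) linear_diff[OF linear_proj] proj_idem ..
    then have "\<forall>\<^sub>F n in sequentially.
        norm (l2norm Z (Shat Z h (a n) - Shat Z h l)) \<le> norm (f n - l)"
      using norm_proj_le by (simp add: l2norm_def)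
    moreover have "(\<lambda>n. norm (f n - l)) \<longlonglongrightarrow> 0"
      using \<open>f \<longlonglongrightarrow> l\<close> by (simp add: LIM_zero tendsto_norm_zero)
    ultimately have "(\<lambda>n. l2norm Z (Shat Z h (a n) - Shat Z h l)) \<longlonglongrightarrow> 0"
      by (rule Lim_null_comparison)
    then have "Shat Z h l \<in> Shat Z h ` A"
      using range_closed a(1) Shat_in_l2 unfolding l2_closed_def
      by (elim allE[of _ "\<lambda>n. Shat Z h (a n)"] allE[of _ "Shat Z h l"] mp) blast
    then obtain a' where "a' \<in> A" "Shat Z h l = Shat Z h a'" by auto
    have "norm (f n - proj a') = l2norm Z (Shat Z h (a n) - Shat Z h l)" for n
      by (simp add: l2norm_Shat_diff a(2) \<open>Shat Z h l = _\<close>)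
    then have "(\<lambda>n. norm (f n - proj a')) \<longlonglongrightarrow> 0"
      using \<open>(\<lambda>n. l2norm Z _) \<longlonglongrightarrow> 0\<close> by simp
    then have "f \<longlonglongrightarrow> proj a'"
      by (simp add: tendsto_norm_zero_iff LIM_zero_iff)
    then show "l \<in> proj ` A"
      using \<open>f \<longlonglongrightarrow> l\<close> \<open>a' \<in> A\<close> LIMSEQ_unique by blast
  qed
qed

sublocale B: closed_subspace "proj ` A"
  by (rule proj_image_closed_subspace)

definition lsq :: 'a where
  "lsq = (SOME a. a \<in> A \<and> proj a = nearest (proj ` A) (synth shat))"

lemma lsq: "lsq \<in> A" "proj lsq = nearest (proj ` A) (synth shat)"
proof -
  obtain a where "a \<in> A" "nearest (proj ` A) (synth shat) = proj a"
    using B.nearest_in[of "synth shat"] by (auto simp: image_iff)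
  then have "\<exists>a. a \<in> A \<and> proj a = nearest (proj ` A) (synth shat)" by auto
  from someI_ex[OF this] show "lsq \<in> A" "proj lsq = nearest (proj ` A) (synth shat)"
    unfolding lsq_def by simp_all
qed

lemma proj_synth_shat: "proj (synth shat) = synth shat"
  using shat_in_l2 by (simp add: proj_synth shat_def)

lemma residual_orthogonal: "b \<in> proj ` A \<Longrightarrow> inner (synth shat - proj lsq) b = 0"
  using B.nearest_orthogonal lsq(2) by simp

lemma residual_orthogonal_A:
  assumes "a \<in> A"
  shows "inner (synth shat - proj lsq) a = 0"
proof -
  have residual: "synth shat - proj lsq = proj (synth shat - lsq)"
    by (simp add: linear_diff[OF linear_proj] proj_synth_shat)
  have "inner (synth shat - proj lsq) a = inner (proj (proj (synth shat - lsq))) a"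
    by (simp add: residual proj_idem)
  also have "\<dots> = inner (synth shat - proj lsq) (proj a)"
    unfolding residual by (rule proj_selfadjoint)
  finally show ?thesis using residual_orthogonal assms by simp
qed

lemma mem_Cset_s_iff: "v \<in> Cset Z h s \<longleftrightarrow> Shat Z h v = shat"
  by (auto simp: mem_Cset_iff shat_def Shat_def fun_eq_iff)

lemma nearest_Cset: "nearest (Cset Z h s) v = v + (synth shat - proj v)"
proof (rule nearest_eqI)
  define w where "w = v + (synth shat - proj v)"
  have "Shat Z h w = shat"
    by (simp add: w_def Shat_add Shat_diff Shat_proj Shat_synth_shat)
  then show "w \<in> Cset Z h s" by (simp add: mem_Cset_s_iff)
  fix z assume "z \<in> Cset Z h s"
  then have "proj (z - w) = 0"
    by (simp add: mem_Cset_s_iff linear_diff[OF linear_proj] proj_eq_iff \<open>Shat Z h w = shat\<close>)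
  have "inner (v - w) (z - w) = - inner (proj (synth shat - v)) (z - w)"
    by (simp add: w_def linear_diff[OF linear_proj] proj_synth_shat inner_diff_left)
  also have "\<dots> = - inner (synth shat - v) (proj (z - w))"
    by (simp only: proj_selfadjoint)
  finally show "inner (v - w) (z - w) = 0" using \<open>proj (z - w) = 0\<close> by simp
qed

lemma residual_orthogonal_diff:
  assumes "a \<in> A"
  shows "inner (synth shat - proj lsq) (proj a - proj lsq) = 0"
proof (rule residual_orthogonal)
  show "proj a - proj lsq \<in> proj ` A"
    using assms lsq(1) B.subspace by (intro subspace_diff) auto
qed

lemma proj_lsq_le: "a \<in> A \<Longrightarrow> norm (synth shat - proj lsq) \<le> norm (synth shat - proj a)"
  by (rule orthogonal_residual_imp_le[OF residual_orthogonal_diff])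

lemma proj_lsq_unique:
  "a \<in> A \<Longrightarrow> norm (synth shat - proj a) \<le> norm (synth shat - proj lsq) \<Longrightarrow> proj a = proj lsq"
  by (rule orthogonal_residual_imp_eq[OF residual_orthogonal_diff])

lemma l2_proj_shat: "l2_proj Z (Shat Z h ` A) shat = Shat Z h lsq"
proof -
  have dist_eq: "l2norm Z (shat - Shat Z h a) = norm (synth shat - proj a)" for a
    using l2norm_Shat_diff[of "synth shat" a] by (simp add: Shat_synth_shat proj_synth_shat)
  show ?thesis
    unfolding l2_proj_def
  proof (rule the_equality)
    show "Shat Z h lsq \<in> Shat Z h ` A \<and>
        (\<forall>r\<in>Shat Z h ` A. l2norm Z (shat - Shat Z h lsq) \<le> l2norm Z (shat - r))"
      using lsq(1) proj_lsq_le by (auto simp: dist_eq)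
    fix q assume q: "q \<in> Shat Z h ` A \<and> (\<forall>r\<in>Shat Z h ` A. l2norm Z (shat - q) \<le> l2norm Z (shat - r))"
    then obtain a where "a \<in> A" "q = Shat Z h a" by auto
    then have "proj a = proj lsq"
      using q lsq(1) by (intro proj_lsq_unique) (auto simp: dist_eq)
    then show "q = Shat Z h lsq" using \<open>q = Shat Z h a\<close> by (simp add: proj_eq_iff)
  qed
qed

definition R :: "'a \<Rightarrow> 'a" where
  "R y = y - nearest A (proj y)"

lemma positive_contraction_R: "positive_contraction A R"
proof
  fix y w
  show "y \<in> A \<Longrightarrow> R y \<in> A"
    using A.subspace A.nearest_in by (simp add: R_def subspace_diff)
  show "R (y - w) = R y - R w"
    by (simp add: R_def linear_diff[OF linear_proj] linear_diff[OF A.linear_nearest])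
  assume "y \<in> A"
  have inner_R: "inner (R y) w = inner y w - inner (proj y) w" if "w \<in> A" for w
    using that by (simp add: R_def inner_diff_left A.inner_nearest)
  show "w \<in> A \<Longrightarrow> inner (R y) w = inner y (R w)"
    using inner_R \<open>y \<in> A\<close>
    by (simp add: R_def inner_diff_right inner_commute[of y] A.inner_nearest proj_selfadjoint)
  define P where "P = nearest A (proj y)"
  have "norm P \<le> norm (proj y)" unfolding P_def by (rule A.norm_nearest_le)
  then have "norm P ^2 \<le> norm (proj y)^2" by (simp add: power_mono)
  have "inner P y = norm (proj y)^2"
    using \<open>y \<in> A\<close> by (simp add: P_def A.inner_nearest inner_proj_self)
  have R_y: "R y = y - P" by (simp add: R_def P_def)
  have "norm (R y)^2 = norm y ^2 - 2 * inner P y + norm P ^2"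
    unfolding R_y power2_norm_eq_inner by (simp add: inner_diff_left inner_diff_right inner_commute)
  also have "\<dots> \<le> norm y ^2 - norm (proj y)^2"
    using \<open>norm P ^2 \<le> _\<close> \<open>inner P y = _\<close> by simp
  also have "\<dots> = inner (R y) y"
    unfolding R_y using \<open>inner P y = _\<close> by (simp add: inner_diff_left dot_square_norm)
  finally show "norm (R y)^2 \<le> inner (R y) y" .
qed (fact A.subspace A.closed)+

sublocale R: positive_contraction A R
  by (rule positive_contraction_R)

lemma R_fixed_iff: "y \<in> A \<Longrightarrow> R y = y \<longleftrightarrow> proj y = 0"
proof
  assume "y \<in> A" "R y = y"
  then have "norm (proj y)^2 = inner (nearest A (proj y)) y"
    by (simp add: A.inner_nearest inner_proj_self)
  also have "\<dots> = 0" using \<open>R y = y\<close> by (simp add: R_def)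
  finally show "proj y = 0" by simp
qed (simp add: R_def linear_0[OF A.linear_nearest])

lemma alternating_step:
  assumes "u \<in> A"
  shows "nearest A (nearest (Cset Z h s) u) = lsq + R (u - lsq)"
proof -
  have "nearest A (nearest (Cset Z h s) u)
      = nearest A (u + (synth shat - proj lsq) - proj (u - lsq))"
    by (simp add: nearest_Cset linear_diff[OF linear_proj] algebra_simps)
  also have "\<dots> = nearest A u + nearest A (synth shat - proj lsq) - nearest A (proj (u - lsq))"
    by (simp add: linear_add[OF A.linear_nearest] linear_diff[OF A.linear_nearest])
  also have "\<dots> = u - nearest A (proj (u - lsq))"
    using A.nearest_id[OF assms] A.nearest_eq_0[OF residual_orthogonal_A] by simp
  finally show ?thesis by (simp add: R_def)
qed

lemma alternating_iterates:
  assumes "u0 \<in> A"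
  shows "((nearest A \<circ> nearest (Cset Z h s)) ^^ n) u0 = lsq + (R ^^ n) (u0 - lsq)"
proof (induction n)
  case (Suc n)
  have "(R ^^ n) (u0 - lsq) \<in> A"
    using assms lsq(1) A.subspace by (intro R.powers_in) (simp add: subspace_diff)
  then have "lsq + (R ^^ n) (u0 - lsq) \<in> A" using lsq(1) A.subspace by (simp add: subspace_add)
  then show ?case using Suc by (simp add: alternating_step)
qed simp

lemma alternating_limit:
  assumes "u0 \<in> A"
  obtains U where "(\<lambda>n. ((nearest A \<circ> nearest (Cset Z h s)) ^^ n) u0) \<longlonglongrightarrow> U"
    and "U \<in> A" and "proj U = proj lsq"
    and "\<And>w. w \<in> A \<Longrightarrow> proj w = 0 \<Longrightarrow> inner (u0 - U) w = 0"
proof -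
  have "u0 - lsq \<in> A" using assms lsq(1) A.subspace by (simp add: subspace_diff)
  then obtain z where lim: "(\<lambda>n. (R ^^ n) (u0 - lsq)) \<longlonglongrightarrow> z" and "z \<in> A" "R z = z"
    and orth: "\<And>w. w \<in> A \<Longrightarrow> R w = w \<Longrightarrow> inner z w = inner (u0 - lsq) w"
    using R.powers_tendsto_fixed_point by blast
  show ?thesis
  proof
    show "(\<lambda>n. ((nearest A \<circ> nearest (Cset Z h s)) ^^ n) u0) \<longlonglongrightarrow> lsq + z"
      unfolding alternating_iterates[OF assms] by (intro tendsto_intros lim)
    show "lsq + z \<in> A" using lsq(1) \<open>z \<in> A\<close> A.subspace by (simp add: subspace_add)
    show "proj (lsq + z) = proj lsq"
      using R_fixed_iff \<open>z \<in> A\<close> \<open>R z = z\<close> by (simp add: linear_add[OF linear_proj])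
    show "inner (u0 - (lsq + z)) w = 0" if "w \<in> A" "proj w = 0" for w
      using orth[of w] R_fixed_iff that by (simp add: inner_diff_left algebra_simps)
  qed
qed

lemma nearest_solution_set:
  assumes "U \<in> A" "proj U = proj lsq" "\<And>w. w \<in> A \<Longrightarrow> proj w = 0 \<Longrightarrow> inner (u0 - U) w = 0"
  shows "nearest (A \<inter> {v. proj v = proj lsq}) u0 = U"
proof (rule nearest_eqI)
  show "U \<in> A \<inter> {v. proj v = proj lsq}" using assms(1,2) by simp
  fix v assume "v \<in> A \<inter> {v. proj v = proj lsq}"
  then show "inner (u0 - U) (v - U) = 0"
    using assms A.subspace by (intro assms(3)) (simp_all add: subspace_diff linear_diff[OF linear_proj])
qed

lemma Mset_shat:
  assumes "u0 \<in> A"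
  shows "Mset A Z h (shat - Shat Z h u0) = {v \<in> A. proj (v + u0) = proj lsq}"
proof -
  have residual_eq: "l2norm Z (Shat Z h v - (shat - Shat Z h u0)) = norm (synth shat - proj (v + u0))"
    for v
  proof -
    have "Shat Z h v - (shat - Shat Z h u0) = Shat Z h (v + u0) - Shat Z h (synth shat)"
      by (simp add: Shat_add Shat_synth_shat fun_eq_iff)
    then show ?thesis by (simp add: l2norm_Shat_diff proj_synth_shat norm_minus_commute)
  qed
  show ?thesis
  proof (intro set_eqI iffI)
    fix v assume "v \<in> Mset A Z h (shat - Shat Z h u0)"
    then have "v \<in> A"
      and min: "\<And>w. w \<in> A \<Longrightarrow> norm (synth shat - proj (v + u0)) \<le> norm (synth shat - proj (w + u0))"
      by (auto simp: Mset_def residual_eq)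
    have "lsq - u0 \<in> A" using lsq(1) assms A.subspace by (simp add: subspace_diff)
    from min[OF this] \<open>v \<in> A\<close> show "v \<in> {v \<in> A. proj (v + u0) = proj lsq}"
      using proj_lsq_unique assms A.subspace by (simp add: subspace_add)
  next
    fix v assume "v \<in> {v \<in> A. proj (v + u0) = proj lsq}"
    then show "v \<in> Mset A Z h (shat - Shat Z h u0)"
      using proj_lsq_le assms A.subspace by (auto simp: Mset_def residual_eq subspace_add)
  qed
qed

lemma Shat_pinv_shat:
  assumes "u0 \<in> A" "U \<in> A" "proj U = proj lsq"
    and "\<And>w. w \<in> A \<Longrightarrow> proj w = 0 \<Longrightarrow> inner (u0 - U) w = 0"
  shows "Shat_pinv A Z h (shat - Shat Z h u0) = U - u0"
  unfolding Shat_pinv_eq_nearest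
proof (rule nearest_eqI)
  show "U - u0 \<in> Mset A Z h (shat - Shat Z h u0)"
    unfolding Mset_shat[OF assms(1)] using assms(1-3) A.subspace by (simp add: subspace_diff)
  fix v assume "v \<in> Mset A Z h (shat - Shat Z h u0)"
  then have "v + u0 - U \<in> A" "proj (v + u0 - U) = 0"
    unfolding Mset_shat[OF assms(1)] using assms A.subspace
    by (simp_all add: subspace_add subspace_diff linear_diff[OF linear_proj])
  then have "inner (u0 - U) (v + u0 - U) = 0" by (rule assms(4))
  then show "inner (0 - (U - u0)) (v - (U - u0)) = 0" by (simp add: algebra_simps)
qed

end

theorem theorem1:
  fixes A :: "'a::{real_inner, complete_space} set"
    and Z :: "'z set" and h :: "'z \<Rightarrow> 'a" and s :: "'z \<Rightarrow> real" and u0 :: 'a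
  assumes "subspace A" and "closed A"
    and "countable Z"
    and "\<forall>j\<in>Z. \<forall>k\<in>Z. j \<noteq> k \<longrightarrow> inner (h j) (h k) = 0"
    and "\<forall>k\<in>Z. h k \<noteq> 0"
    and "l2_closed Z (Shat Z h ` A)"
    and "(\<lambda>k. if k \<in> Z then s k / norm (h k) else 0) \<in> l2 Z"
    and "u0 \<in> A"
  shows "let shat = (\<lambda>k. if k \<in> Z then s k / norm (h k) else 0);
             q = l2_proj Z (Shat Z h ` A) shat;
             sbar = (\<lambda>k. norm (h k) * q k);
             L = nearest (A \<inter> Cset Z h sbar) u0
         in A \<inter> Cset Z h sbar \<noteq> {}
            \<and> (\<lambda>n. ((nearest A \<circ> nearest (Cset Z h s)) ^^ n) u0) \<longlonglongrightarrow> L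
            \<and> L = u0 + Shat_pinv A Z h (shat - Shat Z h u0)"
proof -
  interpret alternating_projections Z h A s
    using assms by unfold_locales auto
  obtain U where lim: "(\<lambda>n. ((nearest A \<circ> nearest (Cset Z h s)) ^^ n) u0) \<longlonglongrightarrow> U"
    and U: "U \<in> A" "proj U = proj lsq"
    and orth: "\<And>w. w \<in> A \<Longrightarrow> proj w = 0 \<Longrightarrow> inner (u0 - U) w = 0"
    using alternating_limit[OF \<open>u0 \<in> A\<close>] by blast
  have solutions: "Cset Z h (\<lambda>k. norm (h k) * l2_proj Z (Shat Z h ` A) shat k)
      = {v. proj v = proj lsq}"
    by (simp add: l2_proj_shat Cset_Shat)
  have "nearest (A \<inter> {v. proj v = proj lsq}) u0 = U"
    using U orth by (rule nearest_solution_set)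
  moreover have "Shat_pinv A Z h (shat - Shat Z h u0) = U - u0"
    using \<open>u0 \<in> A\<close> U orth by (rule Shat_pinv_shat)
  ultimately show ?thesis
    unfolding Let_def shat_def[symmetric] solutions using lim U by auto
qed

end
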